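(* Let $v\in\mathbb{N}$ and $S\subset\mathbb{N}_0$ finite. (a) If $S$ is up-admissible for $v$, then $S$ is down-admissible for $w=v(S)$ and $v=w[S]$. (b) If $S$ is down-admissible for $v$, then $S$ is up-admissible for $u=v[S]$ and $v=u(S)$.
   Context: Fix a prime $p$; $\mathbb{N}=\{1,2,\dots\}$, $\mathbb{N}_0=\mathbb{N}\cup\{0\}$. For $v\in\mathbb{N}$ write $v=\sum_{i=0}^{j}a_ip^i$ with $0\le a_i\le p-1$, $a_j\ne0$, and $a_i=0$ for $i>j$. A finite $S\subset\mathbb{N}_0$ splits uniquely into maximal subsets of consecutive integers (blocks). $S$ is down-admissible for $v$ if (d1) $a_{\min B}\ne0$ for every block $B$ of $S$ and (d2) $s\in S$, $a_{s+1}=0$ imply $s+1\in S$; then $v[S]:=\sum_i\epsilon_ia_ip^i$ with $\epsilon_i=-1$ for $i\in S$, $\epsilon_i=1$ otherwise. $S$ is up-admissible for $v$ if (u1) $a_{\min B}\ne0$ for every block $B$ of $S$ and (u2) $s\in S$, $a_{s+1}=p-1$ imply $s+1\in S$; then $v(S):=\sum_ka'_kp^k$ with $a'_k=-a_k$ for $k\in S$, $a'_k=a_k+2$ for $k\notin S$, $k-1\in S$, and $a'_k=a_k$ otherwise. Admissibility for $v(S)$ or $v[S]$ refers to the $p$-adic digits of these numbers. *)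

theory Defs
  imports "HOL-Computational_Algebra.Primes"
begin

definition digit :: "nat \<Rightarrow> nat \<Rightarrow> nat \<Rightarrow> nat" where
  "digit p v i = (v div p ^ i) mod p"

definition is_block :: "nat set \<Rightarrow> nat set \<Rightarrow> bool" where
  "is_block S B \<longleftrightarrow> (\<exists>m n. m \<le> n \<and> B = {m..n} \<and> B \<subseteq> S
      \<and> (m = 0 \<or> m - 1 \<notin> S) \<and> Suc n \<notin> S)"

definition down_adm :: "nat \<Rightarrow> nat \<Rightarrow> nat set \<Rightarrow> bool" where
  "down_adm p v S \<longleftrightarrow>
     (\<forall>B. is_block S B \<longrightarrow> digit p v (Min B) \<noteq> 0) \<and>
     (\<forall>s\<in>S. digit p v (Suc s) = 0 \<longrightarrow> Suc s \<in> S)"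

definition up_adm :: "nat \<Rightarrow> nat \<Rightarrow> nat set \<Rightarrow> bool" where
  "up_adm p v S \<longleftrightarrow>
     (\<forall>B. is_block S B \<longrightarrow> digit p v (Min B) \<noteq> 0) \<and>
     (\<forall>s\<in>S. digit p v (Suc s) = p - 1 \<longrightarrow> Suc s \<in> S)"

(* v[S]; digits of v vanish at indices >= v, so summing over {..<v} covers all *)
definition vdown :: "nat \<Rightarrow> nat \<Rightarrow> nat set \<Rightarrow> int" where
  "vdown p v S = (\<Sum>i<v. (if i \<in> S then -1 else 1) * int (digit p v i) * int p ^ i)"

definition upd_digit :: "nat \<Rightarrow> nat \<Rightarrow> nat set \<Rightarrow> nat \<Rightarrow> int" where
  "upd_digit p v S k =
     (if k \<in> S then - int (digit p v k)
      else if k \<noteq> 0 \<and> k - 1 \<in> S then int (digit p v k) + 2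
      else int (digit p v k))"

(* v(S); all nonzero modified digits have index in {..<v} \<union> S \<union> Suc ` S *)
definition vup :: "nat \<Rightarrow> nat \<Rightarrow> nat set \<Rightarrow> int" where
  "vup p v S = (\<Sum>k \<in> {..<v} \<union> S \<union> Suc ` S. upd_digit p v S k * int p ^ k)"

end

theory Submission
  imports Defs
begin

(* Let a_k be the digits of v.  In v(S) the negative digits -a_k are removed by borrowing:
   at the start m of a block, -a_m p^m = (p - a_m) p^m - p^(m+1); inside a block the borrowed
   p^k is repaid as well, giving the digit p - 1 - a_k; and the borrow from the last block
   element is absorbed by the digit a_k + 2 after the block, leaving a_k + 1.  Up-admissibility
   says exactly that these numbers lie in [0, p), so they are the digits of w = v(S) (up_digits).
   Negating the block digits of w and undoing the borrowing gives back v, and down-admissibility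
   of w can be read off its digits.  Part (b) runs the same computation backwards: down_digits
   inverts up_digits on the digits of a down-admissible v. *)

lemma digit_less: "p > 0 \<Longrightarrow> digit p v k < p"
  by (simp add: digit_def)

lemma digit_Suc: "digit p v (Suc k) = digit p (v div p) k"
  by (simp add: digit_def div_mult2_eq)

lemma digit_eq_0: "v < p ^ k \<Longrightarrow> digit p v k = 0"
  by (simp add: digit_def)

lemma digit_eq_0_if_le:
  assumes "p \<ge> 2" "v \<le> k"
  shows "digit p v k = 0"
proof (rule digit_eq_0)
  have "v < 2 ^ k" using assms(2) less_exp[of k] by linarith
  also have "\<dots> \<le> p ^ k" using assms(1) by (simp add: power_mono)
  finally show "v < p ^ k" .
qed

lemma digit_eq_0_if_less_power:
  assumes "p > 0" "v < p ^ L" "L \<le> k"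
  shows "digit p v k = 0"
proof (rule digit_eq_0)
  show "v < p ^ k"
    using assms power_increasing[of L k p] by linarith
qed

lemma sum_digits_Suc:
  "(\<Sum>k<Suc L. f k * p ^ k) = f 0 + p * (\<Sum>k<L. f (Suc k) * p ^ k :: nat)"
  by (simp only: sum.lessThan_Suc_shift) (simp add: sum_distrib_left mult_ac)

lemma nat_eq_sum_digits: "v < p ^ L \<Longrightarrow> v = (\<Sum>k<L. digit p v k * p ^ k)"
proof (induction L arbitrary: v)
  case (Suc L)
  then have "v div p < p ^ L"
    by (metis less_mult_imp_div_less mult.commute power_Suc)
  then have "(\<Sum>k<L. digit p v (Suc k) * p ^ k) = v div p"
    using Suc.IH by (simp add: digit_Suc)
  then show ?case
    unfolding sum_digits_Suc by (simp add: digit_def[of p v 0])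
qed simp

lemma digit_sum_digits:
  assumes "\<forall>k. f k < p" "\<forall>k\<ge>L. f k = 0"
  shows "digit p (\<Sum>k<L. f k * p ^ k) = f"
  using assms
proof (induction L arbitrary: f)
  case 0
  then show ?case by (auto simp: digit_def)
next
  case (Suc L)
  define n where "n = (\<Sum>k<L. f (Suc k) * p ^ k)"
  have digit_n: "digit p n = (\<lambda>k. f (Suc k))"
    unfolding n_def using Suc by (intro Suc.IH) auto
  have "f 0 < p" using Suc.prems(1) by blast
  then have "digit p (f 0 + p * n) 0 = f 0" "(f 0 + p * n) div p = n"
    by (auto simp: digit_def)
  then have "digit p (f 0 + p * n) k = f k" for k
    using digit_n by (cases k) (auto simp: digit_Suc)
  then show ?case
    unfolding sum_digits_Suc n_def by blast
qed

lemma int_eq_sum_digits: "v < p ^ L \<Longrightarrow> int v = (\<Sum>k<L. int (digit p v k) * int p ^ k)"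
  using arg_cong[of _ _ int, OF nat_eq_sum_digits] by simp

lemma Suc_image_iff: "k \<in> Suc ` S \<longleftrightarrow> k \<noteq> 0 \<and> k - 1 \<in> S"
  by (cases k) auto

lemma is_block_Min:
  assumes "is_block S B"
  shows "Min B \<in> S - Suc ` S"
proof -
  obtain m n where "m \<le> n" "B = {m..n}" "B \<subseteq> S" "m = 0 \<or> m - 1 \<notin> S"
    using assms unfolding is_block_def by blast
  moreover from this have "Min B = m" by (intro Min_eqI) auto
  ultimately show ?thesis by (auto simp: Suc_image_iff)
qed

lemma ex_is_block_Min:
  assumes "finite S" "m \<in> S - Suc ` S"
  shows "\<exists>B. is_block S B \<and> Min B = m"
proof -
  define n where "n = (LEAST n. m \<le> n \<and> Suc n \<notin> S)"
  have "m \<le> Max (insert m S) \<and> Suc (Max (insert m S)) \<notin> S"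
    using assms(1) by (metis Max_ge Suc_n_not_le_n finite_insert insertI1 insertI2)
  then have n: "m \<le> n" "Suc n \<notin> S"
    unfolding n_def by (metis (mono_tags, lifting) LeastI)+
  have "j \<in> S" if "m \<le> j" "j \<le> n" for j
    using that
  proof (induction j rule: dec_induct)
    case base
    then show ?case using assms(2) by blast
  next
    case (step j)
    then show ?case
      using not_less_Least[of j "\<lambda>n. m \<le> n \<and> Suc n \<notin> S"] unfolding n_def by auto
  qed
  then have "is_block S {m..n}"
    using assms(2) n unfolding is_block_def by (auto simp: Suc_image_iff)
  moreover have "Min {m..n} = m" using n(1) by (intro Min_eqI) auto
  ultimately show ?thesis by blast
qed

lemma all_blocks_Min_iff:
  "finite S \<Longrightarrow> (\<forall>B. is_block S B \<longrightarrow> P (Min B)) \<longleftrightarrow> (\<forall>m \<in> S - Suc ` S. P m)"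
  using is_block_Min ex_is_block_Min by blast

lemma Min_not_in_Suc_image: "finite S \<Longrightarrow> S \<noteq> {} \<Longrightarrow> Min S \<in> S - Suc ` S"
  by (auto dest: Min_le[of S])

lemma up_adm_iff:
  assumes "finite S"
  shows "up_adm p v S \<longleftrightarrow>
     (\<forall>m \<in> S - Suc ` S. digit p v m \<noteq> 0) \<and> (\<forall>k \<in> Suc ` S - S. digit p v k \<noteq> p - 1)"
  using all_blocks_Min_iff[OF assms, of "\<lambda>m. digit p v m \<noteq> 0"] unfolding up_adm_def by blast

lemma down_adm_iff:
  assumes "finite S"
  shows "down_adm p v S \<longleftrightarrow>
     (\<forall>m \<in> S - Suc ` S. digit p v m \<noteq> 0) \<and> (\<forall>k \<in> Suc ` S - S. digit p v k \<noteq> 0)"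
  using all_blocks_Min_iff[OF assms, of "\<lambda>m. digit p v m \<noteq> 0"] unfolding down_adm_def by blast

definition up_digits :: "nat \<Rightarrow> nat set \<Rightarrow> (nat \<Rightarrow> nat) \<Rightarrow> nat \<Rightarrow> nat" where
  "up_digits p S x k =
     (if k \<in> S then (if k \<in> Suc ` S then p - 1 - x k else p - x k)
      else if k \<in> Suc ` S then x k + 1 else x k)"

definition down_digits :: "nat \<Rightarrow> nat set \<Rightarrow> (nat \<Rightarrow> nat) \<Rightarrow> nat \<Rightarrow> nat" where
  "down_digits p S x k =
     (if k \<in> S then (if k \<in> Suc ` S then p - 1 - x k else p - x k)
      else if k \<in> Suc ` S then x k - 1 else x k)"

lemma up_digits_down_digits:
  assumes "\<forall>k. x k < p" "\<forall>k \<in> Suc ` S - S. x k \<noteq> 0"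
  shows "up_digits p S (down_digits p S x) = x"
proof
  fix k
  show "up_digits p S (down_digits p S x) k = x k"
    using assms[rule_format, of k] unfolding up_digits_def down_digits_def by auto
qed

definition borrow :: "nat \<Rightarrow> nat set \<Rightarrow> nat \<Rightarrow> int" where
  "borrow p S k = (if k \<in> Suc ` S then int p ^ k else 0) - (if k \<in> S then int p ^ Suc k else 0)"

lemma sum_borrow:
  assumes "S \<union> Suc ` S \<subseteq> {..<L}"
  shows "(\<Sum>k<L. borrow p S k) = 0"
proof -
  have restrict: "(\<Sum>k<L. if k \<in> A then f k else 0) = sum f A" if "A \<subseteq> {..<L}"
    for A and f :: "nat \<Rightarrow> int"
    using sum.inter_restrict[of "{..<L}" f A] that by (simp add: Int_absorb1)
  have "(\<Sum>k<L. if k \<in> Suc ` S then int p ^ k else 0) = (\<Sum>k\<in>Suc ` S. int p ^ k)"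
    using assms by (intro restrict) blast
  also have "\<dots> = (\<Sum>k\<in>S. int p ^ Suc k)"
    by (simp add: sum.reindex)
  also have "\<dots> = (\<Sum>k<L. if k \<in> S then int p ^ Suc k else 0)"
    using assms by (intro restrict[symmetric]) blast
  finally show ?thesis
    unfolding borrow_def sum_subtractf by simp
qed

lemma upd_digit_eq_up_digits:
  assumes "p > 0"
  shows "upd_digit p v S k * int p ^ k = int (up_digits p S (digit p v) k) * int p ^ k + borrow p S k"
  using digit_less[OF assms, of v k] unfolding upd_digit_def Suc_image_iff[symmetric]
  by (auto simp: up_digits_def borrow_def of_nat_diff algebra_simps)

lemma signed_up_digits:
  assumes "x k < p"
  shows "(if k \<in> S then -1 else 1) * int (up_digits p S x k) * int p ^ k
    = int (x k) * int p ^ k + borrow p S k"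
  using assms
  by (auto simp: up_digits_def borrow_def of_nat_diff algebra_simps)

lemma vup_eq_sum_up_digits:
  assumes "p \<ge> 2" "finite S" "S \<union> Suc ` S \<subseteq> {..<L}" "\<forall>k\<ge>L. digit p v k = 0"
  shows "vup p v S = (\<Sum>k<L. int (up_digits p S (digit p v) k) * int p ^ k)"
proof -
  have "vup p v S = (\<Sum>k<L. upd_digit p v S k * int p ^ k)"
    unfolding vup_def
  proof (rule sum.mono_neutral_cong)
    show "upd_digit p v S k * int p ^ k = 0" if "k \<in> {..<L} - ({..<v} \<union> S \<union> Suc ` S)" for k
      using that digit_eq_0_if_le[OF assms(1), of v k]
      unfolding upd_digit_def Suc_image_iff[symmetric] by auto
    show "upd_digit p v S k * int p ^ k = 0" if "k \<in> {..<v} \<union> S \<union> Suc ` S - {..<L}" for k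
      using that assms(3,4) unfolding upd_digit_def Suc_image_iff[symmetric] by auto
  qed (use assms(2) in auto)
  also have "\<dots> = (\<Sum>k<L. int (up_digits p S (digit p v) k) * int p ^ k + borrow p S k)"
    using assms(1) by (simp add: upd_digit_eq_up_digits)
  also have "\<dots> = (\<Sum>k<L. int (up_digits p S (digit p v) k) * int p ^ k)"
    using assms(3) by (simp add: sum.distrib sum_borrow)
  finally show ?thesis .
qed

lemma vdown_eq_sum_digits:
  assumes "p \<ge> 2" "finite S" "S \<union> Suc ` S \<subseteq> {..<L}" "\<forall>k\<ge>L. digit p v k = 0"
    and "digit p v = up_digits p S x" "\<forall>k. x k < p"
  shows "vdown p v S = (\<Sum>k<L. int (x k) * int p ^ k)"
proof -
  have "vdown p v S = (\<Sum>k<L. (if k \<in> S then -1 else 1) * int (digit p v k) * int p ^ k)"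
    unfolding vdown_def
    by (rule sum.mono_neutral_cong) (use assms(4) digit_eq_0_if_le[OF assms(1)] in auto)
  also have "\<dots> = (\<Sum>k<L. int (x k) * int p ^ k + borrow p S k)"
    using assms(5,6) by (simp add: signed_up_digits)
  also have "\<dots> = (\<Sum>k<L. int (x k) * int p ^ k)"
    using assms(3) by (simp add: sum.distrib sum_borrow)
  finally show ?thesis .
qed

lemma ex_digit_bound:
  fixes p v :: nat
  assumes "p \<ge> 2" "finite S"
  shows "\<exists>L. S \<union> Suc ` S \<subseteq> {..<L} \<and> v < p ^ L"
proof -
  have "finite (S \<union> Suc ` S)" using assms(2) by simp
  then obtain L where L: "S \<union> Suc ` S \<subseteq> {..<L}"
    unfolding finite_nat_set_iff_bounded by blast
  have "v < 2 ^ v" by (rule less_exp)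
  also have "\<dots> \<le> p ^ (L + v)"
    using assms(1) by (meson le_add2 order.trans power_increasing power_mono zero_le_numeral one_le_numeral)
  finally show ?thesis using L by (intro exI[of _ "L + v"]) auto
qed

lemma vdown_vup_inverse:
  fixes p v :: nat
  assumes "p \<ge> 2" "finite S" "v \<ge> 1" "up_adm p v S"
  shows "\<exists>w::nat. w \<ge> 1 \<and> int w = vup p v S \<and> down_adm p w S \<and> int v = vdown p w S"
proof -
  obtain L where L: "S \<union> Suc ` S \<subseteq> {..<L}" "v < p ^ L"
    using ex_digit_bound assms(1,2) by blast
  define a where "a = digit p v"
  define b where "b = up_digits p S a"
  have a_less: "\<forall>k. a k < p" and a_zero: "\<forall>k\<ge>L. a k = 0"
    using assms(1) L(2) digit_less digit_eq_0_if_less_power unfolding a_def by simp_all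
  have v_sum: "int v = (\<Sum>k<L. int (a k) * int p ^ k)"
    unfolding a_def by (rule int_eq_sum_digits[OF L(2)])
  have b_less: "\<forall>k. b k < p"
  proof
    fix k
    have "a k \<noteq> 0" if "k \<in> S - Suc ` S"
      using assms(4) that unfolding up_adm_iff[OF assms(2)] a_def by blast
    moreover have "a k \<noteq> p - 1" if "k \<in> Suc ` S - S"
      using assms(4) that unfolding up_adm_iff[OF assms(2)] a_def by blast
    ultimately show "b k < p"
      using a_less[rule_format, of k] unfolding b_def up_digits_def by auto
  qed
  have b_zero: "\<forall>k\<ge>L. b k = 0"
    using L(1) a_zero unfolding b_def up_digits_def by auto
  define w where "w = (\<Sum>k<L. b k * p ^ k)"
  have digit_w: "digit p w = b"
    unfolding w_def using b_less b_zero by (rule digit_sum_digits)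
  have "vup p v S = (\<Sum>k<L. int (b k) * int p ^ k)"
    using vup_eq_sum_up_digits[OF assms(1,2) L(1), of v] a_zero unfolding b_def a_def by blast
  then have "vup p v S = int w" unfolding w_def by simp
  moreover have "vdown p w S = (\<Sum>k<L. int (a k) * int p ^ k)"
  proof (rule vdown_eq_sum_digits[OF assms(1,2) L(1) _ _ a_less])
    show "\<forall>k\<ge>L. digit p w k = 0" using b_zero unfolding digit_w .
    show "digit p w = up_digits p S a" unfolding digit_w b_def ..
  qed
  then have "vdown p w S = int v" unfolding v_sum .
  moreover have "down_adm p w S"
    using a_less unfolding down_adm_iff[OF assms(2)] digit_w b_def up_digits_def
    by (auto simp: not_le[symmetric])
  moreover have "w \<noteq> 0"
  proof
    assume "w = 0"
    then have "vdown p w S = 0" by (simp add: vdown_def)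
    then show False using \<open>vdown p w S = int v\<close> assms(3) by simp
  qed
  ultimately show ?thesis by auto
qed

lemma vup_vdown_inverse:
  fixes p v :: nat
  assumes "p \<ge> 2" "finite S" "v \<ge> 1" "down_adm p v S"
  shows "\<exists>u::nat. u \<ge> 1 \<and> int u = vdown p v S \<and> up_adm p u S \<and> int v = vup p u S"
proof -
  obtain L where L: "S \<union> Suc ` S \<subseteq> {..<L}" "v < p ^ L"
    using ex_digit_bound assms(1,2) by blast
  define a where "a = digit p v"
  define c where "c = down_digits p S a"
  have a_less: "\<forall>k. a k < p" and a_zero: "\<forall>k\<ge>L. a k = 0"
    using assms(1) L(2) digit_less digit_eq_0_if_less_power unfolding a_def by simp_all
  have v_sum: "int v = (\<Sum>k<L. int (a k) * int p ^ k)"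
    unfolding a_def by (rule int_eq_sum_digits[OF L(2)])
  have a_start: "\<forall>m \<in> S - Suc ` S. a m \<noteq> 0" and a_after: "\<forall>k \<in> Suc ` S - S. a k \<noteq> 0"
    using assms(4) unfolding down_adm_iff[OF assms(2)] a_def by blast+
  have c_less: "\<forall>k. c k < p"
    using a_less a_start assms(1) unfolding c_def down_digits_def
    by (auto simp: less_imp_diff_less)
  have c_zero: "\<forall>k\<ge>L. c k = 0"
    using L(1) a_zero unfolding c_def down_digits_def by auto
  have up_c: "up_digits p S c = a"
    unfolding c_def using a_less a_after by (rule up_digits_down_digits)
  define u where "u = (\<Sum>k<L. c k * p ^ k)"
  have digit_u: "digit p u = c"
    unfolding u_def using c_less c_zero by (rule digit_sum_digits)
  have "vdown p v S = (\<Sum>k<L. int (c k) * int p ^ k)"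
  proof (rule vdown_eq_sum_digits[OF assms(1,2) L(1) _ _ c_less])
    show "\<forall>k\<ge>L. digit p v k = 0" using a_zero unfolding a_def .
    show "digit p v = up_digits p S c" unfolding up_c a_def ..
  qed
  then have "vdown p v S = int u" unfolding u_def by simp
  moreover have "vup p u S = int v"
  proof -
    have "vup p u S = (\<Sum>k<L. int (up_digits p S c k) * int p ^ k)"
      using vup_eq_sum_up_digits[OF assms(1,2) L(1), of u] c_zero unfolding digit_u by blast
    then show ?thesis unfolding up_c v_sum .
  qed
  moreover have "up_adm p u S"
    unfolding up_adm_iff[OF assms(2)] digit_u
  proof (intro conjI ballI)
    fix m assume "m \<in> S - Suc ` S"
    then show "c m \<noteq> 0" using a_less[rule_format, of m] by (simp add: c_def down_digits_def)
  next
    fix k assume "k \<in> Suc ` S - S"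
    then show "c k \<noteq> p - 1"
      using a_less[rule_format, of k] assms(1) by (simp add: c_def down_digits_def)
  qed
  moreover have "u \<noteq> 0"
  proof (cases "S = {}")
    case True
    then have "c = a" unfolding c_def down_digits_def by auto
    then have "u = v"
      unfolding u_def a_def by (simp only: nat_eq_sum_digits[OF L(2), symmetric])
    then show ?thesis using assms(3) by simp
  next
    case False
    then have "Min S \<in> S - Suc ` S" by (rule Min_not_in_Suc_image[OF assms(2)])
    then have "c (Min S) \<noteq> 0"
      using a_less unfolding c_def down_digits_def by (auto simp: not_le[symmetric])
    then show ?thesis unfolding digit_u[symmetric] digit_def by (metis div_0 mod_0)
  qed
  ultimately show ?thesis by auto
qed

theorem lemma2p14:
  fixes p v :: nat and S :: "nat set"
  assumes "prime p" and "v \<ge> 1" and "finite S"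
  shows "(up_adm p v S \<longrightarrow>
            (\<exists>w::nat. w \<ge> 1 \<and> int w = vup p v S \<and> down_adm p w S \<and> int v = vdown p w S))
       \<and> (down_adm p v S \<longrightarrow>
            (\<exists>u::nat. u \<ge> 1 \<and> int u = vdown p v S \<and> up_adm p u S \<and> int v = vup p u S))"
proof -
  have "p \<ge> 2" using assms(1) by (rule prime_ge_2_nat)
  then show ?thesis
    using vdown_vup_inverse[of p S v] vup_vdown_inverse[of p S v] assms(2,3) by blast
qed

end
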